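(* Let $\sigma$ be a finite relational signature and let $\mathcal{A}$ and $\mathcal{B}$ be finite $\sigma$-structures with domains $A$ and $B$. The following are equivalent: (I) there is a surjective homomorphism from $\mathcal{A}^{|A|^{|B|}}$ to $\mathcal{B}$; (II) there exists a positive integer $r<\omega$ such that there is a surjective homomorphism from $\mathcal{A}^r$ to $\mathcal{B}$; (III) $\mathrm{QCSP}(\mathcal{A}) \subseteq \mathrm{QCSP}(\mathcal{B})$; (IV) $\Pi_2\text{-}\mathrm{CSP}(\mathcal{A}) \subseteq \Pi_2\text{-}\mathrm{CSP}(\mathcal{B})$.
   Context: A homomorphism $h:\mathcal{A}\to\mathcal{B}$ is a map $A\to B$ such that for every $p$-ary $R\in\sigma$, $(a_1,\dots,a_p)\in R^{\mathcal{A}}$ implies $(h(a_1),\dots,h(a_p))\in R^{\mathcal{B}}$. For a cardinal $m$, $\mathcal{A}^m$ is the direct (categorical) power: domain $A^m$, and a tuple of elements is in $R^{\mathcal{A}^m}$ iff it is in $R^{\mathcal{A}}$ coordinatewise. A positive Horn (pH) sentence is a first-order sentence built from atomic formulas (relational atoms of $\sigma$ and equalities) using only $\exists$, $\forall$ and $\wedge$; it can be put in prenex form $\forall \bar x_1\exists\bar y_1\cdots\forall\bar x_k\exists\bar y_k\,P$ with $P$ a conjunction of atoms. $\mathrm{QCSP}(\mathcal{A})$ denotes the set of pH sentences true in $\mathcal{A}$; $\Pi_2\text{-}\mathrm{CSP}(\mathcal{A})$ denotes the set of pH sentences of the form $\forall\bar x_1\exists\bar y_1\,P$ ($P$ a conjunction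 of atoms) true in $\mathcal{A}$. *)

theory Defs
  imports "HOL-Library.FuncSet"
begin

record ('r, 'a) struc =
  dom :: "'a set"
  rel :: "'r \<Rightarrow> 'a list set"

definition is_struc :: "'r set \<Rightarrow> ('r \<Rightarrow> nat) \<Rightarrow> ('r, 'a) struc \<Rightarrow> bool" where
  "is_struc Sig ar S \<longleftrightarrow> dom S \<noteq> {} \<and>
     (\<forall>R\<in>Sig. \<forall>t\<in>rel S R. length t = ar R \<and> set t \<subseteq> dom S)"

definition hom :: "'r set \<Rightarrow> ('r, 'a) struc \<Rightarrow> ('r, 'b) struc \<Rightarrow> ('a \<Rightarrow> 'b) \<Rightarrow> bool" where
  "hom Sig S T h \<longleftrightarrow> h ` dom S \<subseteq> dom T \<and>
     (\<forall>R\<in>Sig. \<forall>t\<in>rel S R. map h t \<in> rel T R)"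

definition surj_hom :: "'r set \<Rightarrow> ('r, 'a) struc \<Rightarrow> ('r, 'b) struc \<Rightarrow> ('a \<Rightarrow> 'b) \<Rightarrow> bool" where
  "surj_hom Sig S T h \<longleftrightarrow> hom Sig S T h \<and> h ` dom S = dom T"

definition pow :: "('r \<Rightarrow> nat) \<Rightarrow> ('r, 'a) struc \<Rightarrow> nat \<Rightarrow> ('r, nat \<Rightarrow> 'a) struc" where
  "pow ar S m = \<lparr> dom = PiE {..<m} (\<lambda>_. dom S),
     rel = (\<lambda>R. {t. length t = ar R \<and> set t \<subseteq> PiE {..<m} (\<lambda>_. dom S) \<and>
                     (\<forall>i<m. map (\<lambda>f. f i) t \<in> rel S R)}) \<rparr>"

datatype 'r pH =
    Atom 'r "nat list"
  | Eq nat nat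
  | Conj "'r pH" "'r pH"
  | Ex nat "'r pH"
  | All nat "'r pH"

fun fv :: "'r pH \<Rightarrow> nat set" where
  "fv (Atom R xs) = set xs"
| "fv (Eq x y) = {x, y}"
| "fv (Conj p q) = fv p \<union> fv q"
| "fv (Ex x p) = fv p - {x}"
| "fv (All x p) = fv p - {x}"

fun wf_pH :: "'r set \<Rightarrow> ('r \<Rightarrow> nat) \<Rightarrow> 'r pH \<Rightarrow> bool" where
  "wf_pH Sig ar (Atom R xs) \<longleftrightarrow> R \<in> Sig \<and> length xs = ar R"
| "wf_pH Sig ar (Eq x y) \<longleftrightarrow> True"
| "wf_pH Sig ar (Conj p q) \<longleftrightarrow> wf_pH Sig ar p \<and> wf_pH Sig ar q"
| "wf_pH Sig ar (Ex x p) \<longleftrightarrow> wf_pH Sig ar p"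
| "wf_pH Sig ar (All x p) \<longleftrightarrow> wf_pH Sig ar p"

fun sat :: "('r, 'a) struc \<Rightarrow> 'r pH \<Rightarrow> (nat \<Rightarrow> 'a) \<Rightarrow> bool" where
  "sat S (Atom R xs) e \<longleftrightarrow> map e xs \<in> rel S R"
| "sat S (Eq x y) e \<longleftrightarrow> e x = e y"
| "sat S (Conj p q) e \<longleftrightarrow> sat S p e \<and> sat S q e"
| "sat S (Ex x p) e \<longleftrightarrow> (\<exists>a\<in>dom S. sat S p (e(x := a)))"
| "sat S (All x p) e \<longleftrightarrow> (\<forall>a\<in>dom S. sat S p (e(x := a)))"

fun qfree :: "'r pH \<Rightarrow> bool" where
  "qfree (Atom R xs) = True"
| "qfree (Eq x y) = True"
| "qfree (Conj p q) = (qfree p \<and> qfree q)"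
| "qfree (Ex x p) = False"
| "qfree (All x p) = False"

definition is_Pi2 :: "'r pH \<Rightarrow> bool" where
  "is_Pi2 \<phi> \<longleftrightarrow> (\<exists>xs ys P. qfree P \<and> \<phi> = foldr All xs (foldr Ex ys P))"

text \<open>Truth of a sentence: closed, so the assignment is irrelevant.\<close>
definition QCSP :: "'r set \<Rightarrow> ('r \<Rightarrow> nat) \<Rightarrow> ('r, 'a) struc \<Rightarrow> 'r pH set" where
  "QCSP Sig ar S = {\<phi>. wf_pH Sig ar \<phi> \<and> fv \<phi> = {} \<and> (\<forall>e. sat S \<phi> e)}"

definition Pi2_CSP :: "'r set \<Rightarrow> ('r \<Rightarrow> nat) \<Rightarrow> ('r, 'a) struc \<Rightarrow> 'r pH set" where
  "Pi2_CSP Sig ar S = {\<phi>\<in>QCSP Sig ar S. is_Pi2 \<phi>}"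

end

theory Submission
  imports Defs
begin

text \<open>Positive Horn sentences are preserved by direct powers, since they can be evaluated
coordinatewise, and by surjective homomorphisms; this gives (II) \<open>\<Longrightarrow>\<close> (III).
For (IV) \<open>\<Longrightarrow>\<close> (I), let \<open>k = |B|\<close> and \<open>m = |A|^k\<close>, and let \<open>c\<^sub>0, \<dots>, c\<^sub>k\<^sub>-\<^sub>1 \<in> A\<^sup>m\<close> be the
columns of an \<open>m \<times> k\<close> matrix whose rows enumerate \<open>A\<^sup>k\<close>. The \<open>\<Pi>\<^sub>2\<close> sentence
\<open>\<forall>x\<^sub>0 \<dots> x\<^sub>k\<^sub>-\<^sub>1. \<exists>(y\<^sub>d : d \<in> A\<^sup>m). \<Delta>(y) \<and> \<And>\<^sub>j x\<^sub>j = y\<^sub>c\<^sub>j\<close>, with \<open>\<Delta>\<close> the positive diagram of \<open>A\<^sup>m\<close>,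
says that every assignment of the \<open>c\<^sub>j\<close> extends to a homomorphism from \<open>A\<^sup>m\<close>. It holds in
\<open>A\<close>, where the projections do the job, hence in \<open>B\<close>; sending the \<open>c\<^sub>j\<close> onto all of \<open>B\<close>
then yields a surjective homomorphism \<open>A\<^sup>m \<rightarrow> B\<close>.\<close>

lemma sat_cong: "(\<And>x. x \<in> fv p \<Longrightarrow> e x = e' x) \<Longrightarrow> sat S p e \<longleftrightarrow> sat S p e'"
proof (induction p arbitrary: e e')
  case (Atom R xs)
  then have "map e xs = map e' xs" by simp
  then show ?case by (simp only: sat.simps)
next
  case (Conj p q)
  have "sat S p e \<longleftrightarrow> sat S p e'" "sat S q e \<longleftrightarrow> sat S q e'"
    by (rule Conj.IH; use Conj.prems in simp)+
  then show ?case by simp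
next
  case (Ex x p)
  have "sat S p (e(x := a)) \<longleftrightarrow> sat S p (e'(x := a))" for a
    by (rule Ex.IH) (use Ex.prems in auto)
  then show ?case by simp
next
  case (All x p)
  have "sat S p (e(x := a)) \<longleftrightarrow> sat S p (e'(x := a))" for a
    by (rule All.IH) (use All.prems in auto)
  then show ?case by simp
qed simp

lemma sat_foldr_Conj: "sat S (foldr Conj qs p) e \<longleftrightarrow> sat S p e \<and> (\<forall>q\<in>set qs. sat S q e)"
  by (induction qs) auto

definition variants :: "('r, 'a) struc \<Rightarrow> nat set \<Rightarrow> (nat \<Rightarrow> 'a) \<Rightarrow> (nat \<Rightarrow> 'a) set" where
  "variants S X e = {e'. (\<forall>v. v \<notin> X \<longrightarrow> e' v = e v) \<and> e' ` X \<subseteq> dom S}"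

lemma variants_empty [simp]: "variants S {} e = {e}"
  by (auto simp: variants_def)

lemma variants_insert: "variants S (insert x X) e = (\<Union>a\<in>dom S. variants S X (e(x := a)))"
proof
  show "variants S (insert x X) e \<subseteq> (\<Union>a\<in>dom S. variants S X (e(x := a)))"
  proof
    fix e' assume "e' \<in> variants S (insert x X) e"
    then have "e' x \<in> dom S" "e' \<in> variants S X (e(x := e' x))"
      by (auto simp: variants_def)
    then show "e' \<in> (\<Union>a\<in>dom S. variants S X (e(x := a)))" by blast
  qed
  show "(\<Union>a\<in>dom S. variants S X (e(x := a))) \<subseteq> variants S (insert x X) e"
    by (auto simp: variants_def split: if_splits)
qed

lemma sat_foldr_Ex: "sat S (foldr Ex xs p) e \<longleftrightarrow> (\<exists>e'\<in>variants S (set xs) e. sat S p e')"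
  by (induction xs arbitrary: e) (auto simp: variants_insert)

lemma sat_foldr_All: "sat S (foldr All xs p) e \<longleftrightarrow> (\<forall>e'\<in>variants S (set xs) e. sat S p e')"
  by (induction xs arbitrary: e) (auto simp: variants_insert)

lemma fv_foldr_Conj: "fv (foldr Conj qs p) = fv p \<union> (\<Union>q\<in>set qs. fv q)"
  by (induction qs) auto

lemma fv_foldr_Ex: "fv (foldr Ex xs p) = fv p - set xs"
  by (induction xs) auto

lemma fv_foldr_All: "fv (foldr All xs p) = fv p - set xs"
  by (induction xs) auto

lemma wf_pH_foldr_Conj: "wf_pH Sig ar (foldr Conj qs p) \<longleftrightarrow> wf_pH Sig ar p \<and> (\<forall>q\<in>set qs. wf_pH Sig ar q)"
  by (induction qs) auto

lemma wf_pH_foldr_Ex: "wf_pH Sig ar (foldr Ex xs p) \<longleftrightarrow> wf_pH Sig ar p"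
  by (induction xs) auto

lemma wf_pH_foldr_All: "wf_pH Sig ar (foldr All xs p) \<longleftrightarrow> wf_pH Sig ar p"
  by (induction xs) auto

lemma qfree_foldr_Conj: "qfree (foldr Conj qs p) \<longleftrightarrow> qfree p \<and> (\<forall>q\<in>set qs. qfree q)"
  by (induction qs) auto

lemma sat_surj_hom:
  assumes h: "surj_hom Sig S T h" and "wf_pH Sig ar p" and "\<And>x. e x \<in> dom S" and "sat S p e"
  shows "sat T p (h \<circ> e)"
  using assms(2-)
proof (induction p arbitrary: e)
  case (Atom R xs)
  then have "map e xs \<in> rel S R" "R \<in> Sig" by simp_all
  then have "map h (map e xs) \<in> rel T R" using h unfolding surj_hom_def hom_def by blast
  then show ?case by (simp add: comp_def)
next
  case (Ex x p)
  then obtain a where a: "a \<in> dom S" "sat S p (e(x := a))" by auto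
  have "wf_pH Sig ar p" "(e(x := a)) y \<in> dom S" for y using Ex.prems a by simp_all
  then have "sat T p (h \<circ> e(x := a))" using Ex.IH a(2) by blast
  moreover have "h a \<in> dom T" using h a(1) by (auto simp: surj_hom_def)
  ultimately show ?case by (metis fun_upd_comp sat.simps(4))
next
  case (All x p)
  have "sat T p ((h \<circ> e)(x := h a))" if a: "a \<in> dom S" for a
  proof -
    have "wf_pH Sig ar p" "(e(x := a)) y \<in> dom S" "sat S p (e(x := a))" for y
      using All.prems a by simp_all
    then have "sat T p (h \<circ> e(x := a))" using All.IH by blast
    then show ?thesis by (simp only: fun_upd_comp)
  qed
  then show ?case using h unfolding surj_hom_def by (metis imageE sat.simps(5))
qed auto

lemma sat_pow:
  assumes "wf_pH Sig ar p" and "\<And>x. e x \<in> dom (pow ar A r)"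
    and "\<And>i. i < r \<Longrightarrow> sat A p (\<lambda>x. e x i)"
  shows "sat (pow ar A r) p e"
  using assms
proof (induction p arbitrary: e)
  case (Atom R xs)
  then show ?case by (auto simp: pow_def map_map o_def)
next
  case (Eq x y)
  then have "e x \<in> PiE {..<r} (\<lambda>_. dom A)" "e y \<in> PiE {..<r} (\<lambda>_. dom A)"
    "\<And>i. i \<in> {..<r} \<Longrightarrow> e x i = e y i"
    by (simp_all add: pow_def)
  then show ?case by (metis PiE_ext sat.simps(2))
next
  case (Ex x p)
  then have "\<forall>i\<in>{..<r}. \<exists>a\<in>dom A. sat A p ((\<lambda>y. e y i)(x := a))" by auto
  then obtain c where c: "\<And>i. i < r \<Longrightarrow> c i \<in> dom A \<and> sat A p ((\<lambda>y. e y i)(x := c i))"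
    by (metis lessThan_iff)
  define a where "a = restrict c {..<r}"
  have a: "a \<in> dom (pow ar A r)" using c by (auto simp: pow_def a_def)
  have "sat (pow ar A r) p (e(x := a))"
  proof (rule Ex.IH)
    fix i assume "i < r"
    then have "(\<lambda>y. (e(x := a)) y i) = (\<lambda>y. e y i)(x := c i)" by (auto simp: a_def)
    then show "sat A p (\<lambda>y. (e(x := a)) y i)" using c \<open>i < r\<close> by simp
  qed (use a Ex.prems in auto)
  then show ?case using a by auto
next
  case (All x p)
  have "sat (pow ar A r) p (e(x := a))" if a: "a \<in> dom (pow ar A r)" for a
  proof (rule All.IH)
    fix i assume "i < r"
    then have "a i \<in> dom A" using a by (auto simp: pow_def)
    moreover have "(\<lambda>y. (e(x := a)) y i) = (\<lambda>y. e y i)(x := a i)" by auto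
    ultimately show "sat A p (\<lambda>y. (e(x := a)) y i)" using All.prems(3) \<open>i < r\<close> by simp
  qed (use a All.prems in auto)
  then show ?case by simp
qed auto

lemma QCSP_subset_if_surj_hom_pow:
  assumes "is_struc Sig ar A" and h: "surj_hom Sig (pow ar A r) B h"
  shows "QCSP Sig ar A \<subseteq> QCSP Sig ar B"
proof
  fix \<phi> assume "\<phi> \<in> QCSP Sig ar A"
  then have wf: "wf_pH Sig ar \<phi>" and closed: "fv \<phi> = {}" and true: "\<And>e. sat A \<phi> e"
    by (auto simp: QCSP_def)
  obtain a where "a \<in> dom A" using assms(1) by (auto simp: is_struc_def)
  define c where "c = restrict (\<lambda>_. a) {..<r}"
  have c: "c \<in> dom (pow ar A r)" using \<open>a \<in> dom A\<close> by (simp add: c_def pow_def)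
  have "sat (pow ar A r) \<phi> (\<lambda>_. c)"
    by (rule sat_pow[OF wf]) (use c true in auto)
  then have "sat B \<phi> (h \<circ> (\<lambda>_. c))"
    by (rule sat_surj_hom[OF h wf, rotated]) (use c in auto)
  then have "sat B \<phi> e" for e
    using sat_cong[of \<phi> e "h \<circ> (\<lambda>_. c)" B] closed by simp
  then show "\<phi> \<in> QCSP Sig ar B" using wf closed unfolding QCSP_def by blast
qed

definition hom_extensible :: "'r set \<Rightarrow> ('r, 'c) struc \<Rightarrow> 'c list \<Rightarrow> ('r, 'a) struc \<Rightarrow> bool" where
  "hom_extensible Sig C cs S \<longleftrightarrow>
     (\<forall>as. length as = length cs \<and> set as \<subseteq> dom S \<longrightarrow> (\<exists>h. hom Sig C S h \<and> map h cs = as))"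

text \<open>With \<open>k = length cs\<close>, the variables \<open>0, \<dots>, k - 1\<close> are universal and stand for the
entries of \<open>cs\<close>; the existential variable \<open>var d\<close> stands for the element \<open>d\<close> of \<open>C\<close>,
whose atoms (listed in \<open>ats\<close>) form the positive diagram. The conjunct \<open>Eq k k\<close> only
serves as a base case for the conjunction.\<close>

definition canonical_matrix :: "('c \<Rightarrow> nat) \<Rightarrow> ('r \<times> 'c list) list \<Rightarrow> 'c list \<Rightarrow> 'r pH" where
  "canonical_matrix var ats cs =
     foldr Conj (map (\<lambda>(R, t). Atom R (map var t)) ats @ map (\<lambda>j. Eq j (var (cs ! j))) [0..<length cs])
       (Eq (length cs) (length cs))"

definition canonical_sentence :: "('c \<Rightarrow> nat) \<Rightarrow> nat \<Rightarrow> ('r \<times> 'c list) list \<Rightarrow> 'c list \<Rightarrow> 'r pH" where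
  "canonical_sentence var n ats cs =
     foldr All [0..<length cs] (foldr Ex [length cs..<length cs + n] (canonical_matrix var ats cs))"

locale canonical_sentence_data =
  fixes Sig :: "'r set" and ar :: "'r \<Rightarrow> nat" and C :: "('r, 'c) struc" and cs :: "'c list"
    and var :: "'c \<Rightarrow> nat" and n :: nat and ats :: "('r \<times> 'c list) list"
  assumes struc: "is_struc Sig ar C"
    and cs_dom: "set cs \<subseteq> dom C"
    and var_inj: "inj_on var (dom C)"
    and var_image: "var ` dom C = {length cs..<length cs + n}"
    and ats: "set ats = Sigma Sig (rel C)"
begin

abbreviation "k \<equiv> length cs"
abbreviation "evars \<equiv> {k..<k + n}"

lemma rel_tuple_wf: "R \<in> Sig \<Longrightarrow> t \<in> rel C R \<Longrightarrow> length t = ar R \<and> set t \<subseteq> dom C"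
  using struc by (auto simp: is_struc_def)

lemma var_in_evars: "d \<in> dom C \<Longrightarrow> var d \<in> evars"
  using var_image by blast

lemma sat_canonical_matrix:
  "sat S (canonical_matrix var ats cs) e \<longleftrightarrow>
     (\<forall>R\<in>Sig. \<forall>t\<in>rel C R. map (e \<circ> var) t \<in> rel S R) \<and> (\<forall>j<k. e (var (cs ! j)) = e j)"
  by (auto simp: canonical_matrix_def sat_foldr_Conj ats)

lemma canonical_sentence_wf_closed_Pi2:
  shows "wf_pH Sig ar (canonical_sentence var n ats cs)"
    and "fv (canonical_sentence var n ats cs) = {}"
    and "is_Pi2 (canonical_sentence var n ats cs)"
proof -
  show "wf_pH Sig ar (canonical_sentence var n ats cs)"
    using rel_tuple_wf
    by (auto simp: canonical_sentence_def canonical_matrix_def ats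
        wf_pH_foldr_All wf_pH_foldr_Ex wf_pH_foldr_Conj)
  have "dom C \<noteq> {}" using struc by (simp add: is_struc_def)
  then have "k \<in> evars" using var_image by fastforce
  moreover have "var d \<in> evars" if "R \<in> Sig" "t \<in> rel C R" "d \<in> set t" for R t d
    using rel_tuple_wf[OF that(1,2)] that(3) var_in_evars by blast
  moreover have "var (cs ! j) \<in> evars" if "j \<in> {0..<k}" for j
    using cs_dom that by (meson atLeastLessThan_iff nth_mem subsetD var_in_evars)
  ultimately have "fv (canonical_matrix var ats cs) \<subseteq> {0..<k} \<union> evars"
    by (auto simp: canonical_matrix_def fv_foldr_Conj ats simp del: atLeastLessThan_iff)
  then show "fv (canonical_sentence var n ats cs) = {}"
    by (auto simp: canonical_sentence_def fv_foldr_All fv_foldr_Ex)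
  have "qfree (canonical_matrix var ats cs)"
    by (auto simp: canonical_matrix_def qfree_foldr_Conj)
  then show "is_Pi2 (canonical_sentence var n ats cs)"
    unfolding is_Pi2_def canonical_sentence_def by blast
qed

lemma sat_canonical_sentence:
  "sat S (canonical_sentence var n ats cs) e \<longleftrightarrow> hom_extensible Sig C cs S"
proof
  assume sat: "sat S (canonical_sentence var n ats cs) e"
  show "hom_extensible Sig C cs S"
    unfolding hom_extensible_def
  proof (intro allI impI)
    fix as assume as: "length as = k \<and> set as \<subseteq> dom S"
    define e1 where "e1 v = (if v < k then as ! v else e v)" for v
    have "e1 \<in> variants S {0..<k} e"
      using as by (auto simp: variants_def e1_def)
    then obtain e2 where e2: "e2 \<in> variants S evars e1" "sat S (canonical_matrix var ats cs) e2"
      using sat by (auto simp: canonical_sentence_def sat_foldr_All sat_foldr_Ex)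
    have "hom Sig C S (e2 \<circ> var)"
      using e2 var_image by (auto simp: hom_def variants_def sat_canonical_matrix)
    moreover have "map (e2 \<circ> var) cs = as"
    proof (rule nth_equalityI)
      fix j assume "j < length (map (e2 \<circ> var) cs)"
      then have "j < k" by simp
      then have "e2 (var (cs ! j)) = e1 j" "e1 j = as ! j"
        using e2 by (auto simp: sat_canonical_matrix variants_def e1_def)
      then show "map (e2 \<circ> var) cs ! j = as ! j" using \<open>j < k\<close> by simp
    qed (use as in simp)
    ultimately show "\<exists>h. hom Sig C S h \<and> map h cs = as" by blast
  qed
next
  assume ext: "hom_extensible Sig C cs S"
  have "\<exists>e2\<in>variants S evars e1. sat S (canonical_matrix var ats cs) e2" if e1: "e1 \<in> variants S {0..<k} e" for e1
  proof -
    have "length (map e1 [0..<k]) = k" "set (map e1 [0..<k]) \<subseteq> dom S"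
      using e1 by (auto simp: variants_def)
    then obtain h where h: "hom Sig C S h" "map h cs = map e1 [0..<k]"
      using ext unfolding hom_extensible_def by blast
    define e2 where "e2 v = (if v \<in> evars then h (inv_into (dom C) var v) else e1 v)" for v
    have e2_var: "e2 (var d) = h d" if "d \<in> dom C" for d
      using that var_inj var_in_evars by (simp add: e2_def)
    have "inv_into (dom C) var v \<in> dom C" if "v \<in> evars" for v
      using that var_image by (metis inv_into_into)
    then have "e2 \<in> variants S evars e1"
      using h(1) by (auto simp: variants_def e2_def hom_def)
    moreover have "sat S (canonical_matrix var ats cs) e2"
      unfolding sat_canonical_matrix
    proof (intro conjI ballI allI impI)
      fix R t assume R: "R \<in> Sig" "t \<in> rel C R"
      then have "map (e2 \<circ> var) t = map h t"
        using rel_tuple_wf e2_var by auto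
      moreover have "map h t \<in> rel S R" using h(1) R by (simp add: hom_def)
      ultimately show "map (e2 \<circ> var) t \<in> rel S R" by (simp only:)
    next
      fix j assume "j < k"
      then have "e2 (var (cs ! j)) = h (cs ! j)" using cs_dom e2_var by (meson nth_mem subsetD)
      also have "\<dots> = e1 j" using arg_cong[OF h(2), of "\<lambda>xs. xs ! j"] \<open>j < k\<close> by simp
      also have "\<dots> = e2 j" using \<open>j < k\<close> by (simp add: e2_def)
      finally show "e2 (var (cs ! j)) = e2 j" .
    qed
    ultimately show ?thesis by blast
  qed
  then show "sat S (canonical_sentence var n ats cs) e"
    unfolding canonical_sentence_def sat_foldr_All sat_foldr_Ex by simp
qed

end

lemma canonical_sentence_data_exists:
  assumes "finite Sig" "is_struc Sig ar C" "finite (dom C)" "set cs \<subseteq> dom C"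
  obtains var n ats where "canonical_sentence_data Sig ar C cs var n ats"
proof -
  obtain f and n :: nat where f: "f ` dom C = {..<n}" "inj_on f (dom C)"
    using finite_imp_inj_to_nat_seg[OF assms(3)] unfolding lessThan_def by blast
  define var where "var d = f d + length cs" for d
  have var_inj: "inj_on var (dom C)"
    using f(2) by (simp add: inj_on_def var_def)
  have "var ` dom C = (\<lambda>i. i + length cs) ` {0..<n}"
    using f(1) by (simp add: var_def image_image[of "\<lambda>i. i + length cs" f, symmetric] atLeast0LessThan)
  then have var_image: "var ` dom C = {length cs..<length cs + n}"
    by (simp add: add.commute)
  have "finite (Sigma Sig (rel C))"
  proof (rule finite_SigmaI[OF assms(1)])
    fix R assume "R \<in> Sig"
    then have "rel C R \<subseteq> {t. set t \<subseteq> dom C \<and> length t = ar R}"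
      using assms(2) by (auto simp: is_struc_def)
    then show "finite (rel C R)"
      using finite_lists_length_eq[OF assms(3)] by (rule finite_subset)
  qed
  then obtain ats where "set ats = Sigma Sig (rel C)"
    using finite_list by blast
  then show ?thesis
    using that assms(2,4) var_inj var_image by (simp add: canonical_sentence_data_def)
qed

lemma hom_extensible_if_Pi2_CSP_subset:
  assumes "finite Sig" "is_struc Sig ar C" "finite (dom C)" "set cs \<subseteq> dom C"
    and "Pi2_CSP Sig ar A \<subseteq> Pi2_CSP Sig ar B" and "hom_extensible Sig C cs A"
  shows "hom_extensible Sig C cs B"
proof -
  obtain var n ats where "canonical_sentence_data Sig ar C cs var n ats"
    using canonical_sentence_data_exists[OF assms(1-4)] .
  then interpret canonical_sentence_data Sig ar C cs var n ats .
  have "sat A (canonical_sentence var n ats cs) e" for e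
    using sat_canonical_sentence assms(6) by blast
  then have "canonical_sentence var n ats cs \<in> Pi2_CSP Sig ar A"
    using canonical_sentence_wf_closed_Pi2 unfolding Pi2_CSP_def QCSP_def by blast
  then have "canonical_sentence var n ats cs \<in> Pi2_CSP Sig ar B"
    using assms(5) by blast
  then show ?thesis
    using sat_canonical_sentence unfolding Pi2_CSP_def QCSP_def by blast
qed

lemma dom_pow: "dom (pow ar A m) = {..<m} \<rightarrow>\<^sub>E dom A"
  by (simp add: pow_def)

lemma is_struc_pow: "is_struc Sig ar A \<Longrightarrow> is_struc Sig ar (pow ar A m)"
  by (auto simp: is_struc_def pow_def PiE_eq_empty_iff)

lemma hom_pow_proj: "i < m \<Longrightarrow> hom Sig (pow ar A m) A (\<lambda>f. f i)"
  by (auto simp: hom_def pow_def)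

lemma surj_hom_pow_if_Pi2_CSP_subset:
  assumes "finite Sig" "is_struc Sig ar A" "is_struc Sig ar B" "finite (dom A)" "finite (dom B)"
    and "Pi2_CSP Sig ar A \<subseteq> Pi2_CSP Sig ar B"
  shows "\<exists>h. surj_hom Sig (pow ar A (card (dom A) ^ card (dom B))) B h"
proof -
  define k where "k = card (dom B)"
  obtain ts where ts: "set ts = {..<k} \<rightarrow>\<^sub>E dom A" "distinct ts"
    using finite_distinct_list[OF finite_PiE[OF finite_lessThan assms(4)]] by blast
  define m where "m = length ts"
  have m: "m = card (dom A) ^ k"
    using distinct_card[OF ts(2)] ts(1) by (simp add: m_def card_PiE)
  define cs where "cs = map (\<lambda>j. \<lambda>i\<in>{..<m}. (ts ! i) j) [0..<k]"
  have ts_nth: "ts ! i \<in> {..<k} \<rightarrow>\<^sub>E dom A" if "i < m" for i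
    using that ts(1) nth_mem by (fastforce simp: m_def)
  have "(\<lambda>i\<in>{..<m}. (ts ! i) j) \<in> dom (pow ar A m)" if "j < k" for j
    using ts_nth that by (auto simp: dom_pow)
  then have cs_dom: "set cs \<subseteq> dom (pow ar A m)"
    by (auto simp: cs_def)
  have "hom_extensible Sig (pow ar A m) cs A"
    unfolding hom_extensible_def
  proof (intro allI impI)
    fix as assume as: "length as = length cs \<and> set as \<subseteq> dom A"
    then have "(\<lambda>j\<in>{..<k}. as ! j) \<in> set ts"
      using ts(1) by (auto simp: cs_def)
    then obtain i where i: "i < m" "ts ! i = (\<lambda>j\<in>{..<k}. as ! j)"
      by (auto simp: in_set_conv_nth m_def)
    have "map (\<lambda>f. f i) cs = as"
      using as i by (auto simp: cs_def intro!: nth_equalityI)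
    with hom_pow_proj[OF i(1)] show "\<exists>h. hom Sig (pow ar A m) A h \<and> map h cs = as" by blast
  qed
  moreover have "finite (dom (pow ar A m))"
    using assms(4) by (simp add: dom_pow finite_PiE)
  ultimately have "hom_extensible Sig (pow ar A m) cs B"
    using hom_extensible_if_Pi2_CSP_subset assms(1,6) is_struc_pow[OF assms(2)] cs_dom by blast
  moreover obtain bs where bs: "set bs = dom B" "distinct bs"
    using finite_distinct_list[OF assms(5)] by blast
  moreover have "length bs = length cs"
    using distinct_card[OF bs(2)] bs(1) by (simp add: cs_def k_def)
  ultimately obtain h where h: "hom Sig (pow ar A m) B h" "map h cs = bs"
    unfolding hom_extensible_def by blast
  then have "dom B \<subseteq> h ` dom (pow ar A m)"
    using cs_dom bs(1) by (metis image_mono set_map)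
  with h(1) have "surj_hom Sig (pow ar A m) B h"
    by (auto simp: surj_hom_def hom_def)
  then show ?thesis using m k_def by blast
qed

theorem mainTheorem1:
  fixes Sig :: "'r set" and ar :: "'r \<Rightarrow> nat"
    and A :: "('r, 'a) struc" and B :: "('r, 'b) struc"
  assumes "finite Sig"
    and "is_struc Sig ar A" and "is_struc Sig ar B"
    and "finite (dom A)" and "finite (dom B)"
  shows "((\<exists>h. surj_hom Sig (pow ar A (card (dom A) ^ card (dom B))) B h)
            \<longleftrightarrow> (\<exists>r::nat. 0 < r \<and> (\<exists>h. surj_hom Sig (pow ar A r) B h)))
       \<and> ((\<exists>r::nat. 0 < r \<and> (\<exists>h. surj_hom Sig (pow ar A r) B h))
            \<longleftrightarrow> QCSP Sig ar A \<subseteq> QCSP Sig ar B)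
       \<and> (QCSP Sig ar A \<subseteq> QCSP Sig ar B
            \<longleftrightarrow> Pi2_CSP Sig ar A \<subseteq> Pi2_CSP Sig ar B)"
proof -
  let ?I = "\<exists>h. surj_hom Sig (pow ar A (card (dom A) ^ card (dom B))) B h"
  let ?II = "\<exists>r::nat. 0 < r \<and> (\<exists>h. surj_hom Sig (pow ar A r) B h)"
  let ?III = "QCSP Sig ar A \<subseteq> QCSP Sig ar B"
  let ?IV = "Pi2_CSP Sig ar A \<subseteq> Pi2_CSP Sig ar B"
  have "0 < card (dom A) ^ card (dom B)"
    using assms(2,4) by (auto simp: is_struc_def card_gt_0_iff)
  then have "?I \<Longrightarrow> ?II" by blast
  moreover have "?II \<Longrightarrow> ?III"
    using QCSP_subset_if_surj_hom_pow[OF assms(2)] by blast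
  moreover have "?III \<Longrightarrow> ?IV"
    by (auto simp: Pi2_CSP_def)
  moreover have "?IV \<Longrightarrow> ?I"
    using surj_hom_pow_if_Pi2_CSP_subset[OF assms] .
  ultimately show ?thesis by blast
qed

end
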